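(* Let $0<\alpha<1$ and $x_A>0$. For a point $(x,y)$ with $x>0$ and $(x,y)\neq(x_A,0)$, consider the Apollonius circle of the Target position $T=(x,y)$ and the Attacker position $A=(x_A,0)$ with ratio $\alpha$, i.e. the circle with center abscissa $x_O=\frac{x-\alpha^2x_A}{1-\alpha^2}$ and radius $r=\frac{\alpha}{1-\alpha^2}\sqrt{(x_A-x)^2+y^2}$. Let $R_e$ be the set of such points $(x,y)$, $x>0$, for which this circle crosses the $y$-axis, i.e. $x_O<r$ (equivalently $x-\alpha^2x_A<\alpha\sqrt{(x_A-x)^2+y^2}$), and let $R_{e_o}$ be the set of remaining points with $x>0$. Then $$R_e=\Big\{(x,y):\ x>0,\ \frac{x^2}{\alpha^2x_A^2}-\frac{y^2}{(1-\alpha^2)x_A^2}<1\Big\},$$ so that the curve separating $R_e$ from $R_{e_o}$ is the right branch ($x>0$) of the hyperbola $$\frac{x^2}{\alpha^2x_A^2}-\frac{y^2}{(1-\alpha^2)x_A^2}=1.$$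
   Context: Setting (reduced state space of the active target defense game): the Attacker starts at $(x_A,0)$ and the Defender at $(-x_A,0)$, $x_A>0$, both with the same constant speed $V_A=V_D$; the Target starts at $(x,y)$ with $x>0$ and has constant speed $V_T$; $\alpha=V_T/V_A\in(0,1)$. The Apollonius circle of $T$ and $A$ with ratio $\alpha$ is the set of points $P$ with $|PT|=\alpha|PA|$. $R_e$ is the escape region: initial Target positions from which the Target can reach the $y$-axis (where the Defender can intercept the Attacker) before the Attacker reaches it, characterized by the Apollonius circle crossing the $y$-axis. *)

theory Defs
  imports Complex_Main
begin

definition apollonius_xO :: "real \<Rightarrow> real \<Rightarrow> real \<Rightarrow> real \<Rightarrow> real" where
  "apollonius_xO \<alpha> xA x y = (x - \<alpha>\<^sup>2 * xA) / (1 - \<alpha>\<^sup>2)"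

definition apollonius_r :: "real \<Rightarrow> real \<Rightarrow> real \<Rightarrow> real \<Rightarrow> real" where
  "apollonius_r \<alpha> xA x y = \<alpha> / (1 - \<alpha>\<^sup>2) * sqrt ((xA - x)\<^sup>2 + y\<^sup>2)"

definition escape_region :: "real \<Rightarrow> real \<Rightarrow> (real \<times> real) set" where
  "escape_region \<alpha> xA = {(x, y). x > 0 \<and> (x, y) \<noteq> (xA, 0) \<and>
      apollonius_xO \<alpha> xA x y < apollonius_r \<alpha> xA x y}"

definition escape_region_complement :: "real \<Rightarrow> real \<Rightarrow> (real \<times> real) set" where
  "escape_region_complement \<alpha> xA = {(x, y). x > 0 \<and> (x, y) \<noteq> (xA, 0) \<and>
      \<not> (apollonius_xO \<alpha> xA x y < apollonius_r \<alpha> xA x y)}"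

end

theory Submission
  imports Defs
begin

text \<open>Squaring the crossing condition \<open>x - \<alpha>\<^sup>2 xA < \<alpha> \<surd>((xA - x)\<^sup>2 + y\<^sup>2)\<close> gives, after
  cancelling the cross terms \<open>2 \<alpha>\<^sup>2 x xA\<close>, exactly the hyperbola inequality. Squaring is
  harmless because when the left side is negative, i.e. \<open>x < \<alpha>\<^sup>2 xA\<close>, the point lies
  inside the vertex \<open>x = \<alpha> xA\<close> of the hyperbola anyway.\<close>

lemma less_sqrt_iff:
  fixes u v :: real
  assumes "0 \<le> v"
  shows "u < sqrt v \<longleftrightarrow> u < 0 \<or> u\<^sup>2 < v"
proof (cases "u < 0")
  case True
  moreover have "0 \<le> sqrt v" using assms by simp
  ultimately show ?thesis by linarith
next
  case False
  then have "u = sqrt (u\<^sup>2)" by simp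
  then show ?thesis using False by (metis real_sqrt_less_iff)
qed

lemma apollonius_square_gap:
  fixes a xA x y :: "'a::comm_ring_1"
  shows "a\<^sup>2 * ((xA - x)\<^sup>2 + y\<^sup>2) - (x - a\<^sup>2 * xA)\<^sup>2
           = (1 - a\<^sup>2) * (a\<^sup>2 * xA\<^sup>2 - x\<^sup>2) + a\<^sup>2 * y\<^sup>2"
  by (simp add: power2_eq_square algebra_simps)

lemma inside_hyperbola_if_centre_left_of_axis:
  fixes a xA x y :: real
  assumes "0 < a" "a < 1" "0 \<le> x" "x < a\<^sup>2 * xA"
  shows "(1 - a\<^sup>2) * x\<^sup>2 - a\<^sup>2 * y\<^sup>2 < (1 - a\<^sup>2) * (a\<^sup>2 * xA\<^sup>2)"
proof -
  have "a\<^sup>2 < 1" using assms by (simp add: power_less_one_iff)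
  have "x\<^sup>2 < (a\<^sup>2 * xA)\<^sup>2" using assms by (intro power_strict_mono) auto
  also have "\<dots> = a\<^sup>2 * (a\<^sup>2 * xA\<^sup>2)" by (simp add: power2_eq_square)
  also have "\<dots> \<le> a\<^sup>2 * xA\<^sup>2" using \<open>a\<^sup>2 < 1\<close> by (intro mult_left_le_one_le) auto
  finally have "x\<^sup>2 < a\<^sup>2 * xA\<^sup>2" .
  with \<open>a\<^sup>2 < 1\<close> have "(1 - a\<^sup>2) * x\<^sup>2 < (1 - a\<^sup>2) * (a\<^sup>2 * xA\<^sup>2)" by simp
  moreover have "0 \<le> a\<^sup>2 * y\<^sup>2" by simp
  ultimately show ?thesis by linarith
qed

lemma apollonius_crossing_iff_hyperbola:
  fixes a xA x y :: real
  assumes "0 < a" "a < 1" "0 \<le> x"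
  shows "x - a\<^sup>2 * xA < a * sqrt ((xA - x)\<^sup>2 + y\<^sup>2) \<longleftrightarrow>
         (1 - a\<^sup>2) * x\<^sup>2 - a\<^sup>2 * y\<^sup>2 < (1 - a\<^sup>2) * (a\<^sup>2 * xA\<^sup>2)"
    (is "?crossing \<longleftrightarrow> ?hyperbola")
proof -
  define c where "c = x - a\<^sup>2 * xA"
  define v where "v = a\<^sup>2 * ((xA - x)\<^sup>2 + y\<^sup>2)"
  have "a * sqrt ((xA - x)\<^sup>2 + y\<^sup>2) = sqrt v"
    using \<open>0 < a\<close> by (simp add: v_def real_sqrt_mult)
  then have "?crossing \<longleftrightarrow> c < 0 \<or> c\<^sup>2 < v"
    by (simp add: c_def less_sqrt_iff v_def)
  moreover have "c\<^sup>2 < v \<longleftrightarrow> ?hyperbola"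
    using apollonius_square_gap[of a xA x y] unfolding c_def v_def by argo
  moreover have "c < 0 \<Longrightarrow> ?hyperbola"
    using inside_hyperbola_if_centre_left_of_axis[OF assms] by (simp add: c_def)
  ultimately show ?thesis by blast
qed

lemma apollonius_xO_less_r_iff:
  fixes \<alpha> xA x y :: real
  assumes "\<alpha>\<^sup>2 < 1"
  shows "apollonius_xO \<alpha> xA x y < apollonius_r \<alpha> xA x y \<longleftrightarrow>
         x - \<alpha>\<^sup>2 * xA < \<alpha> * sqrt ((xA - x)\<^sup>2 + y\<^sup>2)"
  using assms by (simp add: apollonius_xO_def apollonius_r_def divide_less_cancel)

lemma hyperbola_normal_form_iff:
  fixes \<alpha> xA x y :: real
  assumes "\<alpha> \<noteq> 0" "\<alpha>\<^sup>2 < 1" "xA \<noteq> 0"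
  shows "x\<^sup>2 / (\<alpha>\<^sup>2 * xA\<^sup>2) - y\<^sup>2 / ((1 - \<alpha>\<^sup>2) * xA\<^sup>2) < 1 \<longleftrightarrow>
         (1 - \<alpha>\<^sup>2) * x\<^sup>2 - \<alpha>\<^sup>2 * y\<^sup>2 < (1 - \<alpha>\<^sup>2) * (\<alpha>\<^sup>2 * xA\<^sup>2)"
proof -
  have "1 - \<alpha>\<^sup>2 \<noteq> 0" using assms by simp
  have "0 < (1 - \<alpha>\<^sup>2) * (\<alpha>\<^sup>2 * xA\<^sup>2)" using assms by simp
  moreover have "x\<^sup>2 / (\<alpha>\<^sup>2 * xA\<^sup>2) - y\<^sup>2 / ((1 - \<alpha>\<^sup>2) * xA\<^sup>2)
      = ((1 - \<alpha>\<^sup>2) * x\<^sup>2 - \<alpha>\<^sup>2 * y\<^sup>2) / ((1 - \<alpha>\<^sup>2) * (\<alpha>\<^sup>2 * xA\<^sup>2))"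
    using assms \<open>1 - \<alpha>\<^sup>2 \<noteq> 0\<close> by (simp add: diff_divide_distrib)
  ultimately show ?thesis by (simp add: divide_less_eq)
qed

theorem proposition4:
  fixes \<alpha> xA :: real
  assumes "0 < \<alpha>" and "\<alpha> < 1" and "0 < xA"
  shows "escape_region \<alpha> xA =
           {(x, y). x > 0 \<and> (x, y) \<noteq> (xA, 0) \<and>
              x\<^sup>2 / (\<alpha>\<^sup>2 * xA\<^sup>2) - y\<^sup>2 / ((1 - \<alpha>\<^sup>2) * xA\<^sup>2) < 1}"
proof -
  have "\<alpha>\<^sup>2 < 1" using assms by (simp add: power_less_one_iff)
  have "apollonius_xO \<alpha> xA x y < apollonius_r \<alpha> xA x y \<longleftrightarrow>
        x\<^sup>2 / (\<alpha>\<^sup>2 * xA\<^sup>2) - y\<^sup>2 / ((1 - \<alpha>\<^sup>2) * xA\<^sup>2) < 1" if "0 < x" for x y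
    using that assms \<open>\<alpha>\<^sup>2 < 1\<close>
    by (simp add: apollonius_xO_less_r_iff hyperbola_normal_form_iff
        apollonius_crossing_iff_hyperbola)
  then show ?thesis
    unfolding escape_region_def by auto
qed

end
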